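(* Let $(M,\rho)$ be a complete metric space, let $f,g:M\to\mathbb{R}\cup\{+\infty\}$ be lower semicontinuous, and let $f$ also be proper and bounded below. Then $$\inf_{x\in\operatorname{dom} f}(f(x)-g(x))=\inf_{x\in\operatorname{dom}|\widetilde\nabla f|}(f(x)-g(x)).$$
   Context: $\operatorname{dom} f:=\{x:f(x)<+\infty\}$; on $\operatorname{dom} f$, $f(x)-g(x)\in\mathbb{R}\cup\{-\infty\}$ (equal to $-\infty$ if $g(x)=+\infty$). $[t]^+:=\max\{0,t\}$ (with $[f(x)-f(y)]^+:=0$ if $f(y)=+\infty$). For $x\in\operatorname{dom} f$, the global slope is $|\widetilde\nabla f|(x):=\sup_{y\neq x}\frac{[f(x)-f(y)]^+}{\rho(x,y)}\in[0,+\infty]$, and $\operatorname{dom}|\widetilde\nabla f|:=\{x\in\operatorname{dom} f:\ |\widetilde\nabla f|(x)<+\infty\}$. *)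

theory Defs
  imports "HOL-Analysis.Analysis"
begin

text \<open>Extended-real valued functions \<open>M \<Rightarrow> \<real> \<union> {+\<infinity>}\<close> are modelled as
  \<open>'a \<Rightarrow> ereal\<close> together with the hypothesis that \<open>-\<infinity>\<close> is never attained.\<close>

definition lsc :: "('a::topological_space \<Rightarrow> ereal) \<Rightarrow> bool" where
  "lsc f \<longleftrightarrow> (\<forall>c. closed {x. f x \<le> c})"

definition edom :: "('a \<Rightarrow> ereal) \<Rightarrow> 'a set" where
  "edom f = {x. f x < \<infinity>}"

definition pos_diff :: "ereal \<Rightarrow> ereal \<Rightarrow> ereal" where
  "pos_diff a b = (if b = \<infinity> then 0 else max 0 (a - b))"

text \<open>Global slope; it takes values in \<open>[0,+\<infinity>]\<close> (a supremum of nonnegative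
  quantities, hence 0 if \<open>M\<close> is a single point).\<close>
definition global_slope :: "('a::metric_space \<Rightarrow> ereal) \<Rightarrow> 'a \<Rightarrow> ereal" where
  "global_slope f x = sup 0 (SUP y\<in>UNIV - {x}. pos_diff (f x) (f y) / ereal (dist x y))"

definition slope_dom :: "('a::metric_space \<Rightarrow> ereal) \<Rightarrow> 'a set" where
  "slope_dom f = {x \<in> edom f. global_slope f x < \<infinity>}"

end

theory Submission
  imports Defs
begin

text \<open>Ekeland's variational principle with weight \<open>K\<close>, started at any \<open>x \<in> dom f\<close>, yields a
  point \<open>y\<close> with \<open>f y + K \<rho>(x,y) \<le> f x\<close> at which \<open>f\<close> cannot drop faster than \<open>K\<close> times the
  distance, so its global slope is at most \<open>K\<close>. Since \<open>f\<close> is bounded below, taking \<open>K\<close> large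
  forces \<open>y\<close> arbitrarily close to \<open>x\<close> with \<open>f y \<le> f x\<close>; lower semicontinuity of \<open>g\<close> then gives
  \<open>f y - g y\<close> nearly as small as \<open>f x - g x\<close>.\<close>

lemma lsc_open_superlevel:
  assumes "lsc f"
  shows "open {x. c < f x}"
proof -
  have "{x. c < f x} = - {x. f x \<le> c}" by auto
  then show ?thesis using assms unfolding lsc_def by (simp add: open_Compl)
qed

lemma lsc_ball_gt:
  fixes f :: "'a::metric_space \<Rightarrow> ereal"
  assumes "lsc f" "c < f z"
  obtains r where "r > 0" "\<And>w. w \<in> ball z r \<Longrightarrow> c < f w"
  using lsc_open_superlevel[OF assms(1), of c] assms(2)
  by (metis (mono_tags, lifting) mem_Collect_eq open_contains_ball subset_eq)

lemma lsc_add_continuous: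
  fixes f :: "'a::topological_space \<Rightarrow> ereal"
  assumes "lsc f" "continuous_on UNIV h"
  shows "lsc (\<lambda>x. f x + ereal (h x))"
  unfolding lsc_def
proof
  fix c :: ereal
  have "{x. c < f x + ereal (h x)} = {x. \<exists>t::real. ereal t < f x \<and> c - ereal t < ereal (h x)}"
  proof (intro Collect_cong iffI)
    fix x assume "c < f x + ereal (h x)"
    then obtain s where "c < ereal s" "ereal s < f x + ereal (h x)"
      using ereal_dense2 by blast
    then show "\<exists>t. ereal t < f x \<and> c - ereal t < ereal (h x)"
      by (intro exI[of _ "s - h x"]) (cases c; cases "f x"; auto)
  next
    fix x assume "\<exists>t. ereal t < f x \<and> c - ereal t < ereal (h x)"
    then show "c < f x + ereal (h x)" by (cases c; cases "f x") auto
  qed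
  moreover have "open {x. \<exists>t::real. ereal t < f x \<and> c - ereal t < ereal (h x)}"
    using assms by (intro open_Collect_ex open_Collect_conj lsc_open_superlevel open_Collect_less
        continuous_intros) auto
  ultimately show "closed {x. f x + ereal (h x) \<le> c}"
    by (simp add: closed_def Collect_neg_eq[symmetric] not_le)
qed

definition ekeland_set :: "('a::metric_space \<Rightarrow> ereal) \<Rightarrow> real \<Rightarrow> 'a \<Rightarrow> 'a set" where
  "ekeland_set f K p = {z. f z + ereal (K * dist p z) \<le> f p}"

lemma ekeland_set_self: "p \<in> ekeland_set f K p"
  by (simp add: ekeland_set_def)

lemma ekeland_set_mono:
  assumes "K \<ge> 0" "q \<in> ekeland_set f K p"
  shows "ekeland_set f K q \<subseteq> ekeland_set f K p"
proof
  fix z assume "z \<in> ekeland_set f K q"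
  then have "f z + ereal (K * dist q z) \<le> f q" by (simp add: ekeland_set_def)
  have "K * dist p z \<le> K * dist q z + K * dist p q"
    using assms(1) dist_triangle[of p z q] by (simp add: dist_commute mult_left_mono flip: distrib_left)
  then have "f z + ereal (K * dist p z) \<le> f z + ereal (K * dist q z) + ereal (K * dist p q)"
    by (metis add.assoc add_left_mono ereal_less_eq(3) plus_ereal.simps(1))
  also have "\<dots> \<le> f q + ereal (K * dist p q)"
    using \<open>f z + ereal (K * dist q z) \<le> f q\<close> by (rule add_right_mono)
  also have "\<dots> \<le> f p"
    using assms(2) by (simp add: ekeland_set_def add.commute)
  finally show "z \<in> ekeland_set f K p" by (simp add: ekeland_set_def)
qed

lemma closed_ekeland_set:
  assumes "lsc f"
  shows "closed (ekeland_set f K p)"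
proof -
  have "continuous_on UNIV (\<lambda>z. K * dist p z)" by (intro continuous_intros)
  then show ?thesis
    using lsc_add_continuous[OF assms] unfolding ekeland_set_def lsc_def by blast
qed

text \<open>A near-minimiser \<open>q\<close> of \<open>f\<close> on \<open>ekeland_set f K p\<close> has a small Ekeland set: every
  \<open>z\<close> in it lies in \<open>ekeland_set f K p\<close> too, so \<open>f z\<close> cannot undercut \<open>f q\<close> by much, while
  \<open>f z + K \<rho>(q,z) \<le> f q\<close>.\<close>
lemma ekeland_set_small:
  fixes f :: "'a::metric_space \<Rightarrow> ereal"
  assumes lb: "\<And>x. ereal c \<le> f x" and K: "K > 0" and p: "f p \<noteq> \<infinity>" and \<delta>: "\<delta> > 0"
  shows "\<exists>q\<in>ekeland_set f K p. \<forall>z\<in>ekeland_set f K q. dist q z < \<delta>"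
proof -
  define m where "m = (INF z\<in>ekeland_set f K p. f z)"
  have "ereal c \<le> m" unfolding m_def using lb by (rule INF_greatest)
  moreover have "m \<le> f p" unfolding m_def using ekeland_set_self by (rule INF_lower)
  ultimately obtain m' where m': "m = ereal m'" using p by (cases m) auto
  then have "m < m + ereal (K * \<delta>)" using K \<delta> by simp
  then obtain q where q: "q \<in> ekeland_set f K p" "f q < m + ereal (K * \<delta>)"
    unfolding m_def INF_less_iff by blast
  have "dist q z < \<delta>" if z: "z \<in> ekeland_set f K q" for z
  proof -
    have "z \<in> ekeland_set f K p" using ekeland_set_mono[OF _ q(1)] K z by auto
    then have "m \<le> f z" unfolding m_def by (rule INF_lower)
    moreover have "f z + ereal (K * dist q z) \<le> f q" using z by (simp add: ekeland_set_def)
    ultimately have "f z + ereal (K * dist q z) < f z + ereal (K * \<delta>)"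
      using q(2) m' by (cases "f z"; cases "f q") auto
    then have "K * dist q z < K * \<delta>" using lb[of z] by (cases "f z") auto
    then show ?thesis using K by simp
  qed
  then show ?thesis using q(1) by blast
qed

theorem ekeland_variational_principle:
  fixes f :: "'a::complete_space \<Rightarrow> ereal"
  assumes lsc: "lsc f" and lb: "\<And>x. ereal c \<le> f x" and K: "K > 0" and x0: "f x0 \<noteq> \<infinity>"
  obtains y where "f y + ereal (K * dist x0 y) \<le> f x0"
    "\<And>z. z \<noteq> y \<Longrightarrow> f y < f z + ereal (K * dist y z)"
proof -
  let ?S = "ekeland_set f K"
  define P where "P n q \<longleftrightarrow> q \<in> ?S x0 \<and> (\<forall>z\<in>?S q. dist q z < inverse (Suc n))" for n q
  have mono: "q \<in> ?S p \<Longrightarrow> ?S q \<subseteq> ?S p" for p q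
    using K by (intro ekeland_set_mono) auto
  have "\<exists>q. P 0 q"
    using ekeland_set_small[where f = f and \<delta> = "inverse (Suc 0)", OF lb K x0] by (auto simp: P_def)
  moreover have "\<exists>q'. P (Suc n) q' \<and> q' \<in> ?S q" if "P n q" for q n
  proof -
    have "f q \<noteq> \<infinity>" using that x0 by (auto simp: P_def ekeland_set_def)
    from ekeland_set_small[where f = f and \<delta> = "inverse (Suc (Suc n))", OF lb K this]
    obtain q' where "q' \<in> ?S q" "\<forall>z\<in>?S q'. dist q' z < inverse (Suc (Suc n))" by auto
    moreover have "q' \<in> ?S x0" using \<open>q' \<in> ?S q\<close> that mono by (auto simp: P_def)
    ultimately show ?thesis by (auto simp: P_def)
  qed
  ultimately obtain xs where xs: "\<And>n. P n (xs n)" "\<And>n. xs (Suc n) \<in> ?S (xs n)"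
    using dependent_nat_choice[of P "\<lambda>n q q'. q' \<in> ?S q"] by blast
  have decr: "m \<le> n \<Longrightarrow> ?S (xs n) \<subseteq> ?S (xs m)" for m n
    using lift_Suc_antimono_le[of "\<lambda>n. ?S (xs n)"] mono[OF xs(2)] by blast
  obtain y where y: "(\<Inter>n. ?S (xs n)) = {y}"
  proof (rule decreasing_closed_nest_sing[of "\<lambda>n. ?S (xs n)", THEN exE])
    show "closed (?S (xs n))" for n using lsc by (rule closed_ekeland_set)
    show "?S (xs n) \<noteq> {}" for n using ekeland_set_self by blast
    show "m \<le> n \<Longrightarrow> ?S (xs n) \<subseteq> ?S (xs m)" for m n by (rule decr)
    fix e :: real assume "e > 0"
    then obtain n where n: "inverse (real (Suc n)) < e / 2"
      using reals_Archimedean half_gt_zero by blast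
    show "\<exists>n. \<forall>a\<in>?S (xs n). \<forall>b\<in>?S (xs n). dist a b < e"
    proof (intro exI[of _ n] ballI)
      fix a b assume "a \<in> ?S (xs n)" "b \<in> ?S (xs n)"
      then have "dist (xs n) a < inverse (Suc n)" "dist (xs n) b < inverse (Suc n)"
        using xs(1)[of n] by (auto simp: P_def)
      then show "dist a b < e"
        using n dist_triangle[of a b "xs n"] by (simp add: dist_commute)
    qed
  qed blast
  have "y \<in> ?S (xs 0)" "xs 0 \<in> ?S x0" using y xs(1)[of 0] by (auto simp: P_def)
  then have "y \<in> ?S x0" using mono by blast
  moreover have "z \<notin> ?S y" if "z \<noteq> y" for z
    using y mono that by blast
  ultimately show ?thesis
    using that[of y] by (simp add: ekeland_set_def not_le)
qed

lemma global_slope_le: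
  fixes f :: "'a::metric_space \<Rightarrow> ereal"
  assumes K: "K \<ge> 0" and ninf: "\<And>x. f x \<noteq> -\<infinity>"
    and h: "\<And>z. f y \<le> f z + ereal (K * dist y z)"
  shows "global_slope f y \<le> ereal K"
proof -
  have "pos_diff (f y) (f z) \<le> ereal K * ereal (dist y z)" for z
  proof (cases "f z = \<infinity>")
    case False
    then show ?thesis
      using h[of z] ninf[of z] K unfolding pos_diff_def
      by (cases "f y"; cases "f z") (auto simp: mult.commute)
  qed (simp add: pos_diff_def K)
  then have "pos_diff (f y) (f z) / ereal (dist y z) \<le> ereal K" if "z \<noteq> y" for z
    using that by (intro ereal_divide_le_posI) (auto simp: pos_diff_def mult.commute)
  then show ?thesis
    unfolding global_slope_def using K by (auto intro!: SUP_least)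
qed

lemma slope_dom_near_below:
  fixes f :: "'a::complete_space \<Rightarrow> ereal"
  assumes ninf: "\<And>x. f x \<noteq> -\<infinity>" and lsc: "lsc f" and lb: "\<And>x. ereal c \<le> f x"
    and x: "x \<in> edom f" and r: "r > 0"
  obtains y where "y \<in> slope_dom f" "dist x y < r" "f y \<le> f x"
proof -
  obtain a where a: "f x = ereal a" using x ninf[of x] unfolding edom_def by (cases "f x") auto
  define K where "K = (a - c + 1) / r"
  have "c \<le> a" using lb[of x] a by simp
  then have K: "K > 0" and Kr: "K * r = a - c + 1" unfolding K_def using r by auto
  obtain y where y: "f y + ereal (K * dist x y) \<le> f x"
    and min: "\<And>z. z \<noteq> y \<Longrightarrow> f y < f z + ereal (K * dist y z)"
    using ekeland_variational_principle[OF lsc lb K, of x] a by auto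
  obtain b where b: "f y = ereal b" using y a ninf[of y] by (cases "f y") auto
  have "c \<le> b" "b + K * dist x y \<le> a" using lb[of y] y a b by auto
  then have "K * dist x y < K * r" "b \<le> a" using Kr K by (auto intro: order_trans[rotated])
  then have "dist x y < r" "f y \<le> f x" using K a b by auto
  moreover have "f y \<le> f z + ereal (K * dist y z)" for z
    using min[of z] by (cases "z = y") auto
  then have "global_slope f y \<le> ereal K"
    by (rule global_slope_le[OF less_imp_le[OF K] ninf])
  then have "y \<in> slope_dom f" using b by (auto simp: slope_dom_def edom_def)
  ultimately show ?thesis using that by blast
qed

lemma INF_slope_dom_le:
  fixes f g :: "'a::complete_space \<Rightarrow> ereal"
  assumes f_ninf: "\<And>x. f x \<noteq> -\<infinity>" and g_ninf: "\<And>x. g x \<noteq> -\<infinity>"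
    and f_lsc: "lsc f" and g_lsc: "lsc g" and lb: "\<And>x. ereal c \<le> f x" and x: "x \<in> edom f"
  shows "(INF y\<in>slope_dom f. f y - g y) \<le> f x - g x"
proof (rule dense_ge)
  obtain a where a: "f x = ereal a" using f_ninf[of x] x unfolding edom_def by (cases "f x") auto
  fix b assume b: "f x - g x < b"
  show "(INF y\<in>slope_dom f. f y - g y) \<le> b"
  proof (cases b)
    case (real \<beta>)
    then have "ereal (a - \<beta>) < g x" using b a g_ninf[of x] by (cases "g x") auto
    then obtain \<gamma> where \<gamma>: "a - \<beta> < \<gamma>" "ereal \<gamma> < g x" using ereal_dense2 by force
    obtain r where "r > 0" and r: "\<And>w. w \<in> ball x r \<Longrightarrow> ereal \<gamma> < g w"
      using lsc_ball_gt[OF g_lsc \<gamma>(2)] by blast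
    then obtain y where y: "y \<in> slope_dom f" "dist x y < r" "f y \<le> f x"
      using slope_dom_near_below[OF f_ninf f_lsc lb x] by blast
    have "f y - g y < b"
      using r[of y] y(2,3) a real \<gamma>(1) f_ninf[of y] g_ninf[of y]
      by (cases "f y"; cases "g y") auto
    then show ?thesis using INF_lower[OF y(1), of "\<lambda>y. f y - g y"] by simp
  qed (use b in auto)
qed

theorem lemma2p8:
  fixes f g :: "'a::complete_space \<Rightarrow> ereal"
  assumes f_ninf: "\<And>x. f x \<noteq> -\<infinity>"
    and g_ninf: "\<And>x. g x \<noteq> -\<infinity>"
    and f_lsc: "lsc f"
    and g_lsc: "lsc g"
    and f_proper: "edom f \<noteq> {}"
    and f_bdd: "\<exists>c::real. \<forall>x. ereal c \<le> f x"
  shows "(INF x\<in>edom f. f x - g x) = (INF x\<in>slope_dom f. f x - g x)"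
proof (rule antisym)
  show "(INF x\<in>edom f. f x - g x) \<le> (INF x\<in>slope_dom f. f x - g x)"
    by (rule INF_superset_mono) (auto simp: slope_dom_def)
  obtain c :: real where "\<And>x. ereal c \<le> f x" using f_bdd by blast
  then show "(INF x\<in>slope_dom f. f x - g x) \<le> (INF x\<in>edom f. f x - g x)"
    using INF_slope_dom_le[OF f_ninf g_ninf f_lsc g_lsc] by (blast intro: INF_greatest)
qed

end
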